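(* Let $1<\beta\le2$ and let $x\in(0,1)$ be non-simple. (1) For every $y\in(0,1)$ with $y<x$, writing $N=N(x,y)$, we have $x-y\ge \tau_\beta^N(x)/\beta^N$. (2) For every $z\in(0,1)$ with $z>x$, writing $N=N(x,z)$, we have $z-x\ge (1-\tau_\beta^N(x))/\beta^N$.
   Context: Fix $1<\beta\le 2$. The beta-map is $\tau_\beta(x)=\beta x-[\beta x]$ on $[0,1]$, where $[y]$ is the integer part of $y$. The digits are $g_n(x)=[\beta\,\tau_\beta^{n-1}(x)]\in\{0,1\}$ for $n\ge1$ and $x\in[0,1)$, so that $x=\sum_{n\ge1}g_n(x)\beta^{-n}$. A number $x\in[0,1]$ is called simple if $\tau_\beta^{n}(x)=1/\beta$ for some $n\ge0$. For $x\ne y$ in $[0,1]$, the orbit separation time is $N(x,y)=\min\{i\ge1:\ g_i(x)\neq g_i(y)\}$. *)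

theory Defs
  imports Complex_Main
begin

definition beta_map :: "real \<Rightarrow> real \<Rightarrow> real" where
  "beta_map \<beta> x = \<beta> * x - of_int \<lfloor>\<beta> * x\<rfloor>"

definition beta_digit :: "real \<Rightarrow> nat \<Rightarrow> real \<Rightarrow> int" where
  "beta_digit \<beta> n x = \<lfloor>\<beta> * (beta_map \<beta> ^^ (n - 1)) x\<rfloor>"

definition beta_simple :: "real \<Rightarrow> real \<Rightarrow> bool" where
  "beta_simple \<beta> x \<longleftrightarrow> (\<exists>n::nat. (beta_map \<beta> ^^ n) x = 1 / \<beta>)"

definition sep_time :: "real \<Rightarrow> real \<Rightarrow> real \<Rightarrow> nat" where
  "sep_time \<beta> x y = (LEAST i. 1 \<le> i \<and> beta_digit \<beta> i x \<noteq> beta_digit \<beta> i y)"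

end

theory Submission
  imports Defs
begin

text \<open>Up to the separation time N the digits of x and y agree, so the orbits are related by
  T^n x - T^n y = \<beta>^n (x - y) for n < N. At step N the numbers \<beta> T^(N-1) x and
  \<beta> T^(N-1) y, whose difference is \<beta>^N (x - y), have different integer parts; hence the
  gap between them is at least the fractional part T^N x (if y < x), respectively at least
  1 - T^N x (if x < z).\<close>

lemma beta_map_eq_frac: "beta_map \<beta> w = frac (\<beta> * w)"
  by (simp add: beta_map_def frac_def)

lemma beta_map_iterate_Suc: "(beta_map \<beta> ^^ Suc n) w = frac (\<beta> * (beta_map \<beta> ^^ n) w)"
  by (simp add: beta_map_eq_frac)

lemma beta_digit_Suc: "beta_digit \<beta> (Suc n) w = \<lfloor>\<beta> * (beta_map \<beta> ^^ n) w\<rfloor>"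
  by (simp add: beta_digit_def)

lemma beta_map_iterate_bounds:
  assumes "0 \<le> w" "w < 1"
  shows "0 \<le> (beta_map \<beta> ^^ n) w \<and> (beta_map \<beta> ^^ n) w < 1"
  using assms by (cases n) (simp_all add: beta_map_eq_frac frac_lt_1)

lemma beta_map_iterate_diff_eq:
  assumes "\<And>i. 1 \<le> i \<Longrightarrow> i \<le> n \<Longrightarrow> beta_digit \<beta> i x = beta_digit \<beta> i y"
  shows "(beta_map \<beta> ^^ n) x - (beta_map \<beta> ^^ n) y = \<beta> ^ n * (x - y)"
  using assms
proof (induction n)
  case 0
  then show ?case by simp
next
  case (Suc n)
  have "\<lfloor>\<beta> * (beta_map \<beta> ^^ n) x\<rfloor> = \<lfloor>\<beta> * (beta_map \<beta> ^^ n) y\<rfloor>"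
    using Suc.prems[of "Suc n"] by (simp add: beta_digit_Suc)
  then have "(beta_map \<beta> ^^ Suc n) x - (beta_map \<beta> ^^ Suc n) y
      = \<beta> * ((beta_map \<beta> ^^ n) x - (beta_map \<beta> ^^ n) y)"
    by (simp add: beta_map_eq_frac frac_def algebra_simps)
  also have "\<dots> = \<beta> ^ Suc n * (x - y)"
    using Suc by simp
  finally show ?case .
qed

lemma beta_digits_differ:
  assumes "1 < \<beta>" "x \<noteq> y" "0 \<le> x" "x < 1" "0 \<le> y" "y < 1"
  shows "\<exists>i. 1 \<le> i \<and> beta_digit \<beta> i x \<noteq> beta_digit \<beta> i y"
proof (rule ccontr)
  assume "\<not> ?thesis"
  then have "(beta_map \<beta> ^^ n) x - (beta_map \<beta> ^^ n) y = \<beta> ^ n * (x - y)" for n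
    by (intro beta_map_iterate_diff_eq) blast
  moreover have "\<bar>(beta_map \<beta> ^^ n) x - (beta_map \<beta> ^^ n) y\<bar> < 1" for n
    using beta_map_iterate_bounds[OF \<open>0 \<le> x\<close> \<open>x < 1\<close>, where \<beta> = \<beta> and n = n]
      beta_map_iterate_bounds[OF \<open>0 \<le> y\<close> \<open>y < 1\<close>, where \<beta> = \<beta> and n = n] by linarith
  ultimately have bounded: "\<beta> ^ n * \<bar>x - y\<bar> < 1" for n
    using \<open>1 < \<beta>\<close> by (metis abs_mult abs_of_pos zero_less_one less_trans zero_less_power)
  obtain n where "1 / \<bar>x - y\<bar> < \<beta> ^ n"
    using real_arch_pow[OF \<open>1 < \<beta>\<close>] by blast
  then have "1 < \<beta> ^ n * \<bar>x - y\<bar>"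
    using \<open>x \<noteq> y\<close> by (simp add: divide_less_eq)
  with bounded show False
    by (meson less_asym)
qed

lemma sep_time_pre_digits:
  assumes "1 < \<beta>" "x \<noteq> y" "0 \<le> x" "x < 1" "0 \<le> y" "y < 1"
  obtains m where "sep_time \<beta> x y = Suc m"
    and "\<lfloor>\<beta> * (beta_map \<beta> ^^ m) x\<rfloor> \<noteq> \<lfloor>\<beta> * (beta_map \<beta> ^^ m) y\<rfloor>"
    and "\<beta> * (beta_map \<beta> ^^ m) x - \<beta> * (beta_map \<beta> ^^ m) y = \<beta> ^ Suc m * (x - y)"
proof -
  let ?N = "sep_time \<beta> x y"
  have first: "1 \<le> ?N \<and> beta_digit \<beta> ?N x \<noteq> beta_digit \<beta> ?N y"
    unfolding sep_time_def by (rule LeastI_ex[OF beta_digits_differ[OF assms]])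
  then obtain m where m: "?N = Suc m"
    by (metis Suc_le_D One_nat_def)
  have "beta_digit \<beta> i x = beta_digit \<beta> i y" if "1 \<le> i" "i \<le> m" for i
  proof -
    have "i < sep_time \<beta> x y"
      using that m by simp
    then show ?thesis
      using that unfolding sep_time_def by (blast dest: not_less_Least)
  qed
  then have "(beta_map \<beta> ^^ m) x - (beta_map \<beta> ^^ m) y = \<beta> ^ m * (x - y)"
    by (rule beta_map_iterate_diff_eq)
  then have "\<beta> * (beta_map \<beta> ^^ m) x - \<beta> * (beta_map \<beta> ^^ m) y = \<beta> ^ Suc m * (x - y)"
    by (metis mult.assoc power_Suc right_diff_distrib)
  with that m first show ?thesis
    by (simp add: beta_digit_Suc)
qed

lemma frac_le_diff_of_floor_neq:
  fixes u v :: "'a::floor_ceiling"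
  assumes "v \<le> u" "\<lfloor>u\<rfloor> \<noteq> \<lfloor>v\<rfloor>"
  shows "frac u \<le> u - v"
proof -
  have "\<lfloor>v\<rfloor> < \<lfloor>u\<rfloor>"
    using assms floor_mono[OF \<open>v \<le> u\<close>] by linarith
  then have "v < of_int \<lfloor>u\<rfloor>"
    by (meson floor_less_iff)
  then show ?thesis
    by (simp add: frac_def)
qed

lemma one_minus_frac_le_diff_of_floor_neq:
  fixes u v :: "'a::floor_ceiling"
  assumes "u \<le> v" "\<lfloor>u\<rfloor> \<noteq> \<lfloor>v\<rfloor>"
  shows "1 - frac u \<le> v - u"
proof -
  have "\<lfloor>u\<rfloor> + 1 \<le> \<lfloor>v\<rfloor>"
    using assms floor_mono[OF \<open>u \<le> v\<close>] by linarith
  then have "of_int \<lfloor>u\<rfloor> + 1 \<le> v"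
    by (metis le_floor_iff of_int_1 of_int_add)
  then show ?thesis
    by (simp add: frac_def)
qed

lemma sep_time_lower_gap:
  assumes "1 < \<beta>" "0 \<le> y" "y < x" "x < 1"
  shows "(beta_map \<beta> ^^ sep_time \<beta> x y) x / \<beta> ^ sep_time \<beta> x y \<le> x - y"
proof -
  obtain m where m: "sep_time \<beta> x y = Suc m"
    and neq: "\<lfloor>\<beta> * (beta_map \<beta> ^^ m) x\<rfloor> \<noteq> \<lfloor>\<beta> * (beta_map \<beta> ^^ m) y\<rfloor>"
    and gap: "\<beta> * (beta_map \<beta> ^^ m) x - \<beta> * (beta_map \<beta> ^^ m) y = \<beta> ^ Suc m * (x - y)"
    using sep_time_pre_digits[of \<beta> x y] assms by auto
  have "0 < \<beta> ^ Suc m"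
    using \<open>1 < \<beta>\<close> by simp
  then have "0 < \<beta> ^ Suc m * (x - y)"
    using \<open>y < x\<close> by simp
  then have "\<beta> * (beta_map \<beta> ^^ m) y \<le> \<beta> * (beta_map \<beta> ^^ m) x"
    using gap by (simp add: algebra_simps)
  from frac_le_diff_of_floor_neq[OF this neq]
  have "(beta_map \<beta> ^^ Suc m) x \<le> \<beta> ^ Suc m * (x - y)"
    unfolding beta_map_iterate_Suc using gap by linarith
  with \<open>0 < \<beta> ^ Suc m\<close> show ?thesis
    unfolding m by (simp add: divide_le_eq mult.commute)
qed

lemma sep_time_upper_gap:
  assumes "1 < \<beta>" "0 \<le> x" "x < z" "z < 1"
  shows "(1 - (beta_map \<beta> ^^ sep_time \<beta> x z) x) / \<beta> ^ sep_time \<beta> x z \<le> z - x"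
proof -
  obtain m where m: "sep_time \<beta> x z = Suc m"
    and neq: "\<lfloor>\<beta> * (beta_map \<beta> ^^ m) x\<rfloor> \<noteq> \<lfloor>\<beta> * (beta_map \<beta> ^^ m) z\<rfloor>"
    and gap: "\<beta> * (beta_map \<beta> ^^ m) x - \<beta> * (beta_map \<beta> ^^ m) z = \<beta> ^ Suc m * (x - z)"
    using sep_time_pre_digits[of \<beta> x z] assms by auto
  have "0 < \<beta> ^ Suc m"
    using \<open>1 < \<beta>\<close> by simp
  then have "0 < \<beta> ^ Suc m * (z - x)"
    using \<open>x < z\<close> by simp
  then have "\<beta> * (beta_map \<beta> ^^ m) x \<le> \<beta> * (beta_map \<beta> ^^ m) z"
    using gap by (simp add: algebra_simps)
  from one_minus_frac_le_diff_of_floor_neq[OF this neq]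
  have "1 - (beta_map \<beta> ^^ Suc m) x \<le> \<beta> ^ Suc m * (z - x)"
    unfolding beta_map_iterate_Suc using gap by (simp add: algebra_simps)
  with \<open>0 < \<beta> ^ Suc m\<close> show ?thesis
    unfolding m by (simp add: divide_le_eq mult.commute)
qed

theorem lemma2:
  fixes \<beta> x :: real
  assumes "1 < \<beta>" and "\<beta> \<le> 2"
    and "0 < x" and "x < 1"
    and "\<not> beta_simple \<beta> x"
  shows "(\<forall>y. 0 < y \<and> y < 1 \<and> y < x \<longrightarrow>
            x - y \<ge> (beta_map \<beta> ^^ sep_time \<beta> x y) x / \<beta> ^ sep_time \<beta> x y)
       \<and> (\<forall>z. 0 < z \<and> z < 1 \<and> z > x \<longrightarrow>
            z - x \<ge> (1 - (beta_map \<beta> ^^ sep_time \<beta> x z) x) / \<beta> ^ sep_time \<beta> x z)"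
  using sep_time_lower_gap[OF \<open>1 < \<beta>\<close>] sep_time_upper_gap[OF \<open>1 < \<beta>\<close>] assms(3,4)
  by auto

end
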